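(* Let $z_1,\dots,z_N$ be independent with $z_i\sim\mathrm{Bernoulli}(q_i)$, $0<q_i<1$ for every $i\in[N]$, and let $S=\sum_{i=1}^Nz_i$. If $\max_{i\in[N]}q_i<1-\frac1N$, then $\Pr\{S<N\max_{i\in[N]}q_i\}>\frac14$. *)

theory Defs
  imports "HOL-Probability.Probability"
begin

end

theory Submission
  imports Defs
begin

(* Let p be the largest q i and r = 1 - p. Every trial fails with probability at least r, so,
   conditioning on one trial at a time, the number F of failures satisfies
   P(F \<ge> k) \<ge> P(Bin(N, r) \<ge> k). The event S < N p is F > N r, i.e. F \<ge> j + 1 with
   j = \<lfloor>N r\<rfloor> \<ge> 1. The binomial tail increases with the parameter, so it suffices to bound
   P(Bin(N, j/N) > j). The probability that Bin(n, j/n) exceeds its mean j increases with n,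
   hence is at least P(Bin(j+1, j/(j+1)) = j+1) = (1 - 1/(j+1))^(j+1) \<ge> 8/27 when j \<ge> 2;
   for j = 1 the cases N = 2 (where r > 1/2) and N \<ge> 3 (value 7/27 at n = 3) are direct. *)

(* The probability of at least k successes in n independent trials with success probability p;
   the recursion conditions on the last trial. *)
fun binomial_tail :: "nat \<Rightarrow> real \<Rightarrow> nat \<Rightarrow> real" where
  "binomial_tail n p 0 = 1"
| "binomial_tail 0 p (Suc k) = 0"
| "binomial_tail (Suc n) p (Suc k) = (1 - p) * binomial_tail n p (Suc k) + p * binomial_tail n p k"

definition binomial_mass :: "nat \<Rightarrow> real \<Rightarrow> nat \<Rightarrow> real" where
  "binomial_mass n p k = real (n choose k) * p ^ k * (1 - p) ^ (n - k)"

lemma binomial_tail_eq_0: "n < k \<Longrightarrow> binomial_tail n p k = 0"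
proof (induction n arbitrary: k)
  case 0
  then show ?case by (cases k) auto
next
  case (Suc n)
  then show ?case by (cases k) auto
qed

lemma binomial_tail_self: "binomial_tail n p n = p ^ n"
  by (induction n) (auto simp: binomial_tail_eq_0)

lemma binomial_mass_0_right: "binomial_mass n p 0 = (1 - p) ^ n"
  by (simp add: binomial_mass_def)

lemma binomial_mass_Suc_Suc:
  "binomial_mass (Suc n) p (Suc k) = (1 - p) * binomial_mass n p (Suc k) + p * binomial_mass n p k"
proof (cases "k < n")
  case True
  then obtain d where "n = Suc (k + d)"
    using less_imp_Suc_add by blast
  then show ?thesis
    by (simp add: binomial_mass_def algebra_simps)
next
  case False
  then show ?thesis
    by (cases "k = n") (simp_all add: binomial_mass_def binomial_eq_0)
qed

lemma binomial_tail_diff: "binomial_tail n p k - binomial_tail n p (Suc k) = binomial_mass n p k"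
proof (induction n arbitrary: k)
  case 0
  then show ?case by (cases k) (auto simp: binomial_mass_def)
next
  case (Suc n)
  then show ?case
  proof (cases k)
    case 0
    have tail_1: "binomial_tail n p (Suc 0) = 1 - (1 - p) ^ n"
      using Suc.IH[of 0] by (simp add: binomial_mass_0_right)
    show ?thesis
      using 0 by (simp add: tail_1 binomial_mass_0_right algebra_simps)
  next
    case (Suc k')
    with Suc.IH[of k'] Suc.IH[of "Suc k'"] show ?thesis
      by (simp add: binomial_mass_Suc_Suc algebra_simps)
  qed
qed

lemma binomial_mass_nonneg: "0 \<le> p \<Longrightarrow> p \<le> 1 \<Longrightarrow> 0 \<le> binomial_mass n p k"
  by (simp add: binomial_mass_def)

lemma has_real_derivative_binomial_tail:
  "((\<lambda>p. binomial_tail (Suc n) p (Suc k)) has_real_derivative real (Suc n) * binomial_mass n p k) (at p)"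
proof (induction n arbitrary: k p)
  case 0
  have "binomial_tail (Suc 0) p (Suc k) = (if k = 0 then p else 0)" for p
    by (cases k) auto
  then show ?case
    by (cases k) (auto intro!: derivative_eq_intros simp: binomial_mass_def)
next
  case (Suc n)
  let ?T = "\<lambda>k. binomial_tail (Suc n) p k"
  have tail_diff: "?T k - ?T (Suc k) = binomial_mass (Suc n) p k"
    by (rule binomial_tail_diff)
  show ?case
  proof (cases k)
    case 0
    have "((\<lambda>p. (1 - p) * binomial_tail (Suc n) p (Suc 0) + p * 1) has_real_derivative
        - ?T (Suc 0) + (1 - p) * (real (Suc n) * binomial_mass n p 0) + 1) (at p)"
      by (auto intro!: derivative_eq_intros Suc.IH simp del: binomial_tail.simps)
    moreover have "- ?T (Suc 0) + (1 - p) * (real (Suc n) * binomial_mass n p 0) + 1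
        = real (Suc (Suc n)) * binomial_mass (Suc n) p 0"
      using tail_diff 0 by (simp add: binomial_mass_0_right algebra_simps)
    ultimately show ?thesis
      using 0 by simp
  next
    case (Suc k')
    have "((\<lambda>p. (1 - p) * binomial_tail (Suc n) p (Suc k) + p * binomial_tail (Suc n) p (Suc k'))
        has_real_derivative - ?T (Suc k) + (1 - p) * (real (Suc n) * binomial_mass n p k)
          + (?T (Suc k') + p * (real (Suc n) * binomial_mass n p k'))) (at p)"
      by (auto intro!: derivative_eq_intros Suc.IH simp del: binomial_tail.simps)
    moreover have "- ?T (Suc k) + (1 - p) * (real (Suc n) * binomial_mass n p k)
          + (?T (Suc k') + p * (real (Suc n) * binomial_mass n p k'))
        = real (Suc (Suc n)) * binomial_mass (Suc n) p k"
      using tail_diff Suc by (simp add: binomial_mass_Suc_Suc algebra_simps)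
    ultimately show ?thesis
      using Suc by simp
  qed
qed

lemma binomial_tail_mono:
  assumes "0 \<le> p" "p \<le> p'" "p' \<le> 1"
  shows "binomial_tail n p k \<le> binomial_tail n p' k"
proof (cases "n = 0 \<or> k = 0")
  case True
  then show ?thesis
    by (cases k) auto
next
  case False
  then obtain n' k' where nk: "n = Suc n'" "k = Suc k'"
    by (metis not0_implies_Suc)
  show ?thesis
    unfolding nk
  proof (rule DERIV_nonneg_imp_nondecreasing[OF \<open>p \<le> p'\<close>])
    fix x
    assume "p \<le> x" "x \<le> p'"
    with assms have "0 \<le> real (Suc n') * binomial_mass n' x k'"
      by (simp add: binomial_mass_nonneg)
    then show "\<exists>y. ((\<lambda>p. binomial_tail (Suc n') p (Suc k')) has_real_derivative y) (at x) \<and> 0 \<le> y"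
      using has_real_derivative_binomial_tail by blast
  qed
qed

lemma binomial_mass_Suc_le:
  assumes "0 \<le> p" "p \<le> 1" "real (Suc n) * p \<le> real (Suc k)"
  shows "binomial_mass n p (Suc k) \<le> binomial_mass n p k"
proof (cases "k < n")
  case False
  then have "binomial_mass n p (Suc k) = 0"
    by (simp add: binomial_mass_def binomial_eq_0)
  then show ?thesis
    using binomial_mass_nonneg[OF assms(1,2)] by simp
next
  case True
  then obtain d where n: "n = Suc (k + d)"
    using less_imp_Suc_add by blast
  have choose: "real (Suc k) * real (n choose Suc k) = real (Suc d) * real (n choose k)"
  proof -
    have "Suc k * (n choose Suc k) + Suc k * (n choose k) = Suc n * (n choose k)"
      using Suc_times_binomial[of k n] by (simp add: algebra_simps)
    then have "Suc k * (n choose Suc k) = Suc d * (n choose k)"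
      unfolding n by (simp add: algebra_simps)
    then show ?thesis
      by (metis of_nat_mult)
  qed
  have exponents: "n - Suc k = d" "n - k = Suc d"
    using n by simp_all
  let ?C = "real (n choose k) * p ^ k * (1 - p) ^ d"
  have "real (Suc k) * binomial_mass n p (Suc k)
      = (real (Suc k) * real (n choose Suc k)) * p * p ^ k * (1 - p) ^ d"
    unfolding binomial_mass_def exponents by (simp only: power_Suc mult_ac)
  also have "\<dots> = ?C * (real (Suc d) * p)"
    unfolding choose by (simp only: mult_ac)
  also have "\<dots> \<le> ?C * (real (Suc k) * (1 - p))"
    using assms unfolding n by (intro mult_left_mono) (simp_all add: algebra_simps)
  also have "\<dots> = real (Suc k) * binomial_mass n p k"
    unfolding binomial_mass_def exponents by (simp add: algebra_simps)
  finally show ?thesis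
    by simp
qed

lemma has_real_derivative_binomial_tail_interpolation:
  assumes A: "(A has_real_derivative - 1 / real (Suc n)) (at b)"
  shows "((\<lambda>x. (1 - x) * binomial_tail (Suc n) (A x) (Suc (Suc k)) + x * binomial_tail (Suc n) (A x) (Suc k))
      has_real_derivative (A b - b) * (binomial_mass n (A b) k - binomial_mass n (A b) (Suc k))) (at b)"
proof -
  have tail: "((\<lambda>x. binomial_tail (Suc n) (A x) (Suc i)) has_real_derivative - binomial_mass n (A b) i) (at b)"
    for i
    using DERIV_chain2[OF has_real_derivative_binomial_tail[of n i "A b"] A] by (simp del: binomial_tail.simps)
  have mass: "binomial_mass (Suc n) (A b) (Suc k)
      = (1 - A b) * binomial_mass n (A b) (Suc k) + A b * binomial_mass n (A b) k"
    by (rule binomial_mass_Suc_Suc)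
  have "((\<lambda>x. (1 - x) * binomial_tail (Suc n) (A x) (Suc (Suc k)) + x * binomial_tail (Suc n) (A x) (Suc k))
      has_real_derivative - binomial_tail (Suc n) (A b) (Suc (Suc k)) + (1 - b) * - binomial_mass n (A b) (Suc k)
        + (binomial_tail (Suc n) (A b) (Suc k) + b * - binomial_mass n (A b) k)) (at b)"
    by (auto intro!: derivative_eq_intros tail simp del: binomial_tail.simps)
  moreover have "- binomial_tail (Suc n) (A b) (Suc (Suc k)) + (1 - b) * - binomial_mass n (A b) (Suc k)
        + (binomial_tail (Suc n) (A b) (Suc k) + b * - binomial_mass n (A b) k)
      = (A b - b) * (binomial_mass n (A b) k - binomial_mass n (A b) (Suc k))"
    using binomial_tail_diff[of "Suc n" "A b" "Suc k"] mass by (simp add: algebra_simps)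
  ultimately show ?thesis
    by simp
qed

lemma binomial_tail_above_mean_le_Suc:
  assumes "1 \<le> j" "j \<le> n"
  shows "binomial_tail n (real j / real n) (Suc j) \<le> binomial_tail (Suc n) (real j / real (Suc n)) (Suc j)"
proof -
  obtain j' where j: "j = Suc j'"
    using assms(1) by (cases j) auto
  obtain n' where n: "n = Suc n'"
    using assms by (cases n) auto
  (* \<Phi> x: n trials with success probability A x plus one trial with probability x. It moves from
     Bin(n, j/n) at x = 0 to Bin(n+1, j/(n+1)) at x = c = A c, and increases on [0, c] because
     x \<le> A x there and the mass of Bin(n-1, A x) decreases from j-1 to j. *)
  define A where "A x = (real j - x) / real n" for x
  define \<Phi> where "\<Phi> x = (1 - x) * binomial_tail n (A x) (Suc j) + x * binomial_tail n (A x) j" for x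
  define c where "c = real j / real (Suc n)"
  have Phi_mono: "\<Phi> 0 \<le> \<Phi> c"
  proof (rule DERIV_nonneg_imp_nondecreasing[of 0 c \<Phi>])
    show "0 \<le> c"
      by (simp add: c_def)
  next
    fix x
    assume x: "0 \<le> x" "x \<le> c"
    have "(A has_real_derivative - 1 / real n) (at x)"
      unfolding A_def[abs_def] using assms by (auto intro!: derivative_eq_intros simp: field_simps)
    then have deriv: "(\<Phi> has_real_derivative
        (A x - x) * (binomial_mass n' (A x) j' - binomial_mass n' (A x) (Suc j'))) (at x)"
      unfolding \<Phi>_def[abs_def] n j by (rule has_real_derivative_binomial_tail_interpolation)
    have "real (Suc n) * x \<le> real j"
      using x by (simp add: c_def field_simps)
    then have x_le: "x \<le> A x"
      using assms by (simp add: A_def field_simps)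
    have A_le: "A x \<le> 1"
      using x assms by (simp add: A_def field_simps)
    have "real n * A x = real j - x"
      using assms by (simp add: A_def)
    then have "real (Suc n') * A x \<le> real (Suc j')"
      using x unfolding n j by simp
    then have "binomial_mass n' (A x) (Suc j') \<le> binomial_mass n' (A x) j'"
      using x x_le A_le by (intro binomial_mass_Suc_le) auto
    then have "0 \<le> (A x - x) * (binomial_mass n' (A x) j' - binomial_mass n' (A x) (Suc j'))"
      using x_le by simp
    with deriv show "\<exists>y. (\<Phi> has_real_derivative y) (at x) \<and> 0 \<le> y"
      by blast
  qed
  have "real j - c = real n * c"
    by (simp add: c_def field_simps)
  then have "A c = c"
    using assms by (simp add: A_def)
  then have "\<Phi> c = (1 - c) * binomial_tail n c (Suc j) + c * binomial_tail n c j"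
    by (simp add: \<Phi>_def)
  also have "\<dots> = binomial_tail (Suc n) (real j / real (Suc n)) (Suc j)"
    unfolding j c_def by simp
  finally show ?thesis
    using Phi_mono by (simp add: \<Phi>_def A_def)
qed

lemma binomial_tail_above_mean_mono:
  assumes "1 \<le> j" "j \<le> n" "n \<le> n'"
  shows "binomial_tail n (real j / real n) (Suc j) \<le> binomial_tail n' (real j / real n') (Suc j)"
  using assms(3)
proof (induction n' rule: dec_induct)
  case (step m)
  with assms show ?case
    using binomial_tail_above_mean_le_Suc[of j m] by simp
qed simp

lemma one_minus_inverse_power_le_Suc:
  "(1 - 1 / real (Suc n)) ^ Suc n \<le> (1 - 1 / real (Suc (Suc n))) ^ Suc (Suc n)"
proof (cases n)
  case 0
  then show ?thesis
    by simp
next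
  case (Suc n')
  define x where "x = real (Suc n)"
  define y where "y = 1 / (x\<^sup>2 - 1)"
  have x: "2 \<le> x"
    using Suc by (simp add: x_def)
  then have "(2::real)\<^sup>2 \<le> x\<^sup>2"
    by (intro power_mono) auto
  then have "1 < x\<^sup>2"
    by simp
  then have y: "0 < y"
    by (simp add: y_def)
  have nonzero: "x \<noteq> 0" "x + 1 \<noteq> 0" "x * x - 1 \<noteq> 0" "(x + 1) * (x * x - 1) \<noteq> 0"
    using x \<open>1 < x\<^sup>2\<close> by (simp_all add: power2_eq_square)
  have factor: "1 - 1 / (x + 1) = (1 - 1 / x) * (1 + y)"
    using nonzero by (simp add: y_def field_simps power2_eq_square)
  have "(1 - 1 / (x + 1)) * (1 + x * y) = 1 + 1 / ((x + 1) * (x\<^sup>2 - 1))"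
    using nonzero by (simp add: y_def field_simps power2_eq_square)
  then have "1 \<le> (1 - 1 / (x + 1)) * (1 + x * y)"
    using x \<open>1 < x\<^sup>2\<close> by simp
  also have "\<dots> \<le> (1 - 1 / (x + 1)) * (1 + y) ^ Suc n"
    using x y Bernoulli_inequality[of y "Suc n"] by (intro mult_left_mono) (simp_all add: x_def)
  finally have "(1 - 1 / x) ^ Suc n * 1 \<le> (1 - 1 / x) ^ Suc n * ((1 - 1 / (x + 1)) * (1 + y) ^ Suc n)"
    using x by (intro mult_left_mono) simp_all
  also have "\<dots> = (1 - 1 / (x + 1)) ^ Suc (Suc n)"
    unfolding factor by (simp only: power_mult_distrib power_Suc mult_ac)
  finally show ?thesis
    by (simp add: x_def add.commute)
qed

lemma one_minus_inverse_power_ge: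
  assumes "2 \<le> n"
  shows "8 / 27 \<le> (1 - 1 / real (Suc n)) ^ Suc n"
proof -
  have "incseq (\<lambda>n. (1 - 1 / real (Suc n)) ^ Suc n)"
    by (rule incseq_SucI) (rule one_minus_inverse_power_le_Suc)
  then have "(1 - 1 / real (Suc 2)) ^ Suc 2 \<le> (1 - 1 / real (Suc n)) ^ Suc n"
    using assms by (rule incseqD)
  then show ?thesis
    by (simp add: numeral_eq_Suc)
qed

lemma binomial_tail_above_floor_gt_quarter:
  assumes N: "2 \<le> N" and r: "1 / real N < r" "r < 1"
  shows "1 / 4 < binomial_tail N r (Suc (nat \<lfloor>real N * r\<rfloor>))"
proof -
  define j where "j = nat \<lfloor>real N * r\<rfloor>"
  have "1 < real N * r" "real N * r < real N"
    using N r by (simp_all add: field_simps)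
  then have j: "1 \<le> j" "j < N" "real j \<le> real N * r"
    unfolding j_def by linarith+
  have "binomial_tail N (real j / real N) (Suc j) \<le> binomial_tail N r (Suc j)"
    using j r N by (intro binomial_tail_mono) (simp_all add: field_simps)
  moreover have "1 / 4 < binomial_tail N (real j / real N) (Suc j) \<or> 1 / 4 < binomial_tail N r (Suc j)"
  proof -
    consider "2 \<le> j" | "j = 1" "N = 2" | "j = 1" "3 \<le> N"
      using j N by linarith
    then show ?thesis
    proof cases
      case 1
      have "(8::real) / 27 \<le> (1 - 1 / real (Suc j)) ^ Suc j"
        using 1 by (rule one_minus_inverse_power_ge)
      also have "\<dots> = binomial_tail (Suc j) (real j / real (Suc j)) (Suc j)"
        by (simp add: binomial_tail_self field_simps del: binomial_tail.simps)
      also have "\<dots> \<le> binomial_tail N (real j / real N) (Suc j)"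
        using j by (intro binomial_tail_above_mean_mono) simp_all
      finally show ?thesis
        by simp
    next
      case 2
      then have "binomial_tail N r (Suc j) = r\<^sup>2"
        by (simp add: numeral_eq_Suc power2_eq_square)
      moreover have "(1 / 2)\<^sup>2 < r\<^sup>2"
        using 2 r by (intro power_strict_mono) simp_all
      ultimately show ?thesis
        by (simp add: power2_eq_square)
    next
      case 3
      have "7 / 27 = binomial_tail 3 (real j / real 3) (Suc j)"
        using 3 by (simp add: numeral_eq_Suc)
      also have "\<dots> \<le> binomial_tail N (real j / real N) (Suc j)"
        using 3 by (intro binomial_tail_above_mean_mono) simp_all
      finally show ?thesis
        by simp
    qed
  qed
  ultimately show ?thesis
    unfolding j_def by linarith
qed

lemma measurable_card_Collect:
  assumes "finite J" "\<And>i. i \<in> J \<Longrightarrow> X i \<in> M \<rightarrow>\<^sub>M count_space UNIV"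
  shows "(\<lambda>\<omega>. card {i \<in> J. X i \<omega>}) \<in> M \<rightarrow>\<^sub>M count_space UNIV"
proof -
  have "(\<lambda>\<omega>. \<Sum>i\<in>J. of_bool (X i \<omega>) :: nat) \<in> M \<rightarrow>\<^sub>M count_space UNIV"
    using assms(2) by (intro measurable_sum_nat) (simp add: measurable_compose[OF _ measurable_count_space])
  moreover have "(\<Sum>i\<in>J. of_bool (X i \<omega>) :: nat) = card {i \<in> J. X i \<omega>}" for \<omega>
    using assms(1) by (simp add: Int_def conj_commute)
  ultimately show ?thesis
    by simp
qed

context prob_space
begin

lemma indep_var_card_Collect_ge:
  fixes X :: "'i \<Rightarrow> 'a \<Rightarrow> bool"
  assumes indep: "indep_vars (\<lambda>_. count_space UNIV) X (insert t J)" and J: "finite J" "t \<notin> J"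
  shows "indep_var (count_space UNIV) (X t) (count_space UNIV) (\<lambda>\<omega>. k \<le> card {i \<in> J. X i \<omega>})"
proof -
  have "indep_var
      (count_space UNIV) ((\<lambda>f. f t) \<circ> (\<lambda>\<omega>. restrict (\<lambda>i. X i \<omega>) {t}))
      (count_space UNIV) ((\<lambda>f. k \<le> card {i \<in> J. f i}) \<circ> (\<lambda>\<omega>. restrict (\<lambda>i. X i \<omega>) J))"
    using J by (intro indep_var_compose[OF indep_var_restrict[OF indep]]
        measurable_compose[OF measurable_card_Collect measurable_count_space]) auto
  then show ?thesis
    by (simp add: comp_def cong: conj_cong)
qed

lemma prob_card_Collect_insert:
  fixes X :: "'i \<Rightarrow> 'a \<Rightarrow> bool"
  assumes indep: "indep_vars (\<lambda>_. count_space UNIV) X (insert t J)" and J: "finite J" "t \<notin> J"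
  defines "s \<equiv> prob {\<omega> \<in> space M. X t \<omega>}"
    and "P \<equiv> \<lambda>c. prob {\<omega> \<in> space M. c \<le> card {i \<in> J. X i \<omega>}}"
  shows "prob {\<omega> \<in> space M. Suc c \<le> card {i \<in> insert t J. X i \<omega>}} = s * P c + (1 - s) * P (Suc c)"
proof -
  define C where "C \<omega> = card {i \<in> J. X i \<omega>}" for \<omega>
  have [measurable]: "X t \<in> M \<rightarrow>\<^sub>M count_space UNIV"
    using indep by (simp add: indep_vars_def)
  have [measurable]: "C \<in> M \<rightarrow>\<^sub>M count_space UNIV"
    unfolding C_def[abs_def] using indep J by (intro measurable_card_Collect) (auto simp: indep_vars_def)
  have prob_split: "prob {\<omega> \<in> space M. X t \<omega> = b \<and> c \<le> C \<omega>}
      = prob {\<omega> \<in> space M. X t \<omega> = b} * P c" for b c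
    using indep_varD[OF indep_var_card_Collect_ge[OF indep J], of "{b}" "{True}"]
    unfolding P_def C_def by (simp add: vimage_def Int_def conj_commute)
  have "{\<omega> \<in> space M. X t \<omega> = False} = space M - {\<omega> \<in> space M. X t \<omega>}"
    by auto
  then have "prob {\<omega> \<in> space M. X t \<omega> = False} = 1 - s"
    unfolding s_def by (simp add: prob_compl)
  moreover have "card {i \<in> insert t J. X i \<omega>} = C \<omega> + of_bool (X t \<omega>)" for \<omega>
  proof -
    have "{i \<in> insert t J. X i \<omega>} = (if X t \<omega> then insert t {i \<in> J. X i \<omega>} else {i \<in> J. X i \<omega>})"
      by auto
    then show ?thesis
      using J by (simp add: C_def)
  qed
  then have "{\<omega> \<in> space M. Suc c \<le> card {i \<in> insert t J. X i \<omega>}}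
      = {\<omega> \<in> space M. X t \<omega> = True \<and> c \<le> C \<omega>} \<union> {\<omega> \<in> space M. X t \<omega> = False \<and> Suc c \<le> C \<omega>}"
    by auto
  then have "prob {\<omega> \<in> space M. Suc c \<le> card {i \<in> insert t J. X i \<omega>}}
      = prob {\<omega> \<in> space M. X t \<omega> = True \<and> c \<le> C \<omega>} + prob {\<omega> \<in> space M. X t \<omega> = False \<and> Suc c \<le> C \<omega>}"
    by (auto intro!: finite_measure_Union)
  ultimately show ?thesis
    unfolding prob_split by (simp add: s_def)
qed

lemma binomial_tail_le_prob_card_Collect:
  fixes X :: "'i \<Rightarrow> 'a \<Rightarrow> bool"
  assumes "finite J" "indep_vars (\<lambda>_. count_space UNIV) X J"
    and r: "0 \<le> r" "r \<le> 1" and prob_X: "\<And>i. i \<in> J \<Longrightarrow> r \<le> prob {\<omega> \<in> space M. X i \<omega>}"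
  shows "binomial_tail (card J) r k \<le> prob {\<omega> \<in> space M. k \<le> card {i \<in> J. X i \<omega>}}"
  using assms(1,2) prob_X
proof (induction J arbitrary: k rule: finite_induct)
  case empty
  then show ?case
    by (cases k) (simp_all add: prob_space)
next
  case (insert t J)
  define s where "s = prob {\<omega> \<in> space M. X t \<omega>}"
  define P where "P c = prob {\<omega> \<in> space M. c \<le> card {i \<in> J. X i \<omega>}}" for c
  have "indep_vars (\<lambda>_. count_space UNIV) X J"
    using insert.prems(1) by (rule indep_vars_subset) auto
  then have IH: "binomial_tail (card J) r c \<le> P c" for c
    unfolding P_def using insert.IH insert.prems(2) by simp
  show ?case
  proof (cases k)
    case 0
    then show ?thesis
      by (simp add: prob_space)
  next
    case (Suc c)
    have [measurable]: "(\<lambda>\<omega>. card {i \<in> J. X i \<omega>}) \<in> M \<rightarrow>\<^sub>M count_space UNIV"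
      using insert.prems(1) insert.hyps(1) by (intro measurable_card_Collect) (auto simp: indep_vars_def)
    have "P (Suc c) \<le> P c"
      unfolding P_def by (intro finite_measure_mono) auto
    then have gain: "r * (P c - P (Suc c)) \<le> s * (P c - P (Suc c))"
      using insert.prems(2) by (intro mult_right_mono) (simp_all add: s_def)
    have "binomial_tail (card (insert t J)) r k
        = (1 - r) * binomial_tail (card J) r (Suc c) + r * binomial_tail (card J) r c"
      using insert.hyps Suc by simp
    also have "\<dots> \<le> (1 - r) * P (Suc c) + r * P c"
      using IH r by (intro add_mono mult_left_mono) auto
    also have "\<dots> \<le> (1 - s) * P (Suc c) + s * P c"
      using gain by (simp add: algebra_simps)
    also have "\<dots> = prob {\<omega> \<in> space M. k \<le> card {i \<in> insert t J. X i \<omega>}}"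
      unfolding Suc s_def P_def using prob_card_Collect_insert[OF insert.prems(1) insert.hyps] by simp
    finally show ?thesis .
  qed
qed

lemma prob_bernoulli_False:
  assumes "X \<in> M \<rightarrow>\<^sub>M count_space UNIV" "distr M (count_space UNIV) X = measure_pmf (bernoulli_pmf q)"
    and "0 \<le> q" "q \<le> 1"
  shows "prob {\<omega> \<in> space M. \<not> X \<omega>} = 1 - q"
proof -
  have "prob (X -` {False} \<inter> space M) = measure (distr M (count_space UNIV) X) {False}"
    using assms(1) by (simp add: measure_distr)
  also have "\<dots> = 1 - q"
    using assms(2-4) by (simp add: measure_pmf_single)
  finally show ?thesis
    by (simp add: vimage_def Int_def conj_commute)
qed

lemma binomial_tail_le_prob_failures:
  fixes z :: "'i \<Rightarrow> 'a \<Rightarrow> bool"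
  assumes "finite I" and indep: "indep_vars (\<lambda>_. count_space UNIV) z I"
    and distr: "\<And>i. i \<in> I \<Longrightarrow> distr M (count_space UNIV) (z i) = measure_pmf (bernoulli_pmf (q i))"
    and q: "\<And>i. i \<in> I \<Longrightarrow> 0 \<le> q i \<and> q i \<le> p" and "0 \<le> p" "p \<le> 1"
  shows "binomial_tail (card I) (1 - p) k \<le> prob {\<omega> \<in> space M. k \<le> card {i \<in> I. \<not> z i \<omega>}}"
proof (rule binomial_tail_le_prob_card_Collect)
  show "indep_vars (\<lambda>_. count_space UNIV) (\<lambda>i \<omega>. \<not> z i \<omega>) I"
    using indep_vars_compose2[OF indep, of "\<lambda>_. Not" "\<lambda>_. count_space UNIV"] by simp
next
  fix i
  assume i: "i \<in> I"
  have "z i \<in> M \<rightarrow>\<^sub>M count_space UNIV"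
    using indep i by (simp add: indep_vars_def)
  then have "prob {\<omega> \<in> space M. \<not> z i \<omega>} = 1 - q i"
    using q[OF i] \<open>p \<le> 1\<close> by (intro prob_bernoulli_False distr[OF i]) auto
  then show "1 - p \<le> prob {\<omega> \<in> space M. \<not> z i \<omega>}"
    using q[OF i] by simp
qed (use assms in auto)

end

lemma sum_of_bool_less_iff:
  fixes P :: "'i \<Rightarrow> bool"
  assumes "finite I" "p \<le> 1"
  shows "(\<Sum>i\<in>I. of_bool (P i)) < real (card I) * p
    \<longleftrightarrow> Suc (nat \<lfloor>real (card I) * (1 - p)\<rfloor>) \<le> card {i \<in> I. \<not> P i}"
proof -
  have "card {i \<in> I. P i} + card {i \<in> I. \<not> P i} = card I"
    using assms(1) by (subst card_Un_disjoint[symmetric]) (auto intro: arg_cong[where f = card])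
  then have "(\<Sum>i\<in>I. of_bool (P i)) = real (card I) - real (card {i \<in> I. \<not> P i})"
    using assms(1) by (simp add: Int_def conj_commute)
  then have "(\<Sum>i\<in>I. of_bool (P i)) < real (card I) * p
      \<longleftrightarrow> real (card I) * (1 - p) < real (card {i \<in> I. \<not> P i})"
    by (simp add: algebra_simps) linarith
  also have "\<dots> \<longleftrightarrow> Suc (nat \<lfloor>real (card I) * (1 - p)\<rfloor>) \<le> card {i \<in> I. \<not> P i}"
    using assms(2) by (simp add: Suc_le_eq nat_less_iff floor_less_iff)
  finally show ?thesis .
qed

theorem corollary1:
  fixes M :: "'a measure" and N :: nat and q :: "nat \<Rightarrow> real" and z :: "nat \<Rightarrow> 'a \<Rightarrow> bool"
  assumes "prob_space M"
    and "N \<ge> 1"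
    and "\<And>i. i \<in> {1..N} \<Longrightarrow> 0 < q i \<and> q i < 1"
    and "prob_space.indep_vars M (\<lambda>_. count_space UNIV) z {1..N}"
    and "\<And>i. i \<in> {1..N} \<Longrightarrow>
           distr M (count_space UNIV) (z i) = measure_pmf (bernoulli_pmf (q i))"
    and "(MAX i\<in>{1..N}. q i) < 1 - 1 / real N"
  shows "measure M {\<omega> \<in> space M. (\<Sum>i=1..N. of_bool (z i \<omega>)) < real N * (MAX i\<in>{1..N}. q i)}
           > 1 / 4"
proof -
  interpret prob_space M by fact
  define p where "p = (MAX i\<in>{1..N}. q i)"
  have q_le_p: "q i \<le> p" if "i \<in> {1..N}" for i
    unfolding p_def using that by (intro Max_ge) auto
  have "0 < p"
    using assms(2,3) q_le_p[of 1] by fastforce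
  have "p < 1 - 1 / real N"
    using assms(6) by (simp add: p_def)
  with \<open>0 < p\<close> have "2 \<le> N"
    using assms(2) by (cases "N = 1") auto
  have "p \<le> 1"
    using \<open>p < 1 - 1 / real N\<close> by (smt (verit) divide_nonneg_nonneg of_nat_0_le_iff)
  have "1 / 4 < binomial_tail N (1 - p) (Suc (nat \<lfloor>real N * (1 - p)\<rfloor>))"
    using \<open>2 \<le> N\<close> \<open>0 < p\<close> \<open>p < 1 - 1 / real N\<close> by (intro binomial_tail_above_floor_gt_quarter) auto
  also have "\<dots> \<le> prob {\<omega> \<in> space M. Suc (nat \<lfloor>real N * (1 - p)\<rfloor>) \<le> card {i \<in> {1..N}. \<not> z i \<omega>}}"
    using binomial_tail_le_prob_failures[OF _ assms(4,5), of p] assms(3) q_le_p \<open>0 < p\<close> \<open>p \<le> 1\<close>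
    by (simp add: less_imp_le)
  also have "\<dots> = prob {\<omega> \<in> space M. (\<Sum>i=1..N. of_bool (z i \<omega>)) < real N * p}"
    using sum_of_bool_less_iff[of "{1..N}" p] \<open>p \<le> 1\<close> by simp
  finally show ?thesis
    by (simp add: p_def)
qed

end
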